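(* Let $n\ge1$, let $\Omega$ be the set of Borel probability measures on $[0,1]$, let $D(x_0,\dots,x_n;p)=\sum_{k=0}^n\binom{n}{k}p^k(1-p)^{n-k}|p-x_k|$ and $E(\sigma_0,\dots,\sigma_n;\mu)=\int\cdots\int D(x_0,\dots,x_n;p)\,d\sigma_0(x_0)\cdots d\sigma_n(x_n)\,d\mu(p)$. Let $\mu^*\in\Omega$ be an optimal distribution for the first player, i.e. $\mu^*$ attains $\max_{\mu\in\Omega}\min_{\sigma_0,\dots,\sigma_n\in\Omega}E(\sigma_0,\dots,\sigma_n;\mu)$, and let $f(p)=D(a_0,\dots,a_n;p)$ where $(a_0,\dots,a_n)\in[0,1]^{n+1}$ minimizes $\|D(x_0,\dots,x_n;\cdot)\|_\infty$ over $[0,1]^{n+1}$. Then $\operatorname{supp}\mu^*\subset M(f)=\{x\in[0,1]:f(x)=\|f\|_\infty\}$. *)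

theory Defs
  imports "HOL-Probability.Probability"
begin

text \<open>Borel probability measures on [0,1], represented as Borel probability
  measures on the real line concentrated on [0,1].\<close>
definition Omega :: "real measure set" where
  "Omega = {M. prob_space M \<and> sets M = sets borel \<and> emeasure M {0..1} = 1}"

definition D :: "nat \<Rightarrow> (nat \<Rightarrow> real) \<Rightarrow> real \<Rightarrow> real" where
  "D n x p = (\<Sum>k\<le>n. real (n choose k) * p ^ k * (1 - p) ^ (n - k) * \<bar>p - x k\<bar>)"

definition E :: "nat \<Rightarrow> (nat \<Rightarrow> real measure) \<Rightarrow> real measure \<Rightarrow> real" where
  "E n \<sigma> \<mu> = (\<integral>p. (\<integral>x. D n x p \<partial>(PiM {..n} \<sigma>)) \<partial>\<mu>)"

definition game_value :: "nat \<Rightarrow> real measure \<Rightarrow> real" where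
  "game_value n \<mu> = (INF \<sigma>\<in>({..n} \<rightarrow> Omega). E n \<sigma> \<mu>)"

definition supnorm :: "nat \<Rightarrow> (nat \<Rightarrow> real) \<Rightarrow> real" where
  "supnorm n x = (SUP p\<in>{0..1}. \<bar>D n x p\<bar>)"

definition msupport :: "real measure \<Rightarrow> real set" where
  "msupport M = {x. \<forall>e>0. emeasure M (ball x e) > 0}"

end

theory Submission
  imports Defs
begin

(*
  The value of mu* is squeezed between two quantities. Answering every x_k with the Dirac
  measure at a_k shows that it is at most the integral of f against mu*. Conversely it is at
  least ||f||: D is convex in x and uniformly Lipschitz in p, so on a fine grid of points p
  the finite game "choose x, then a mixed p" can be solved approximately by running the
  multiplicative-weights (Hedge) algorithm against an adversary, and minimality of a makes its
  value at least ||f|| up to the grid error. Hence  integral f d mu* >= ||f|| >= f  on [0,1],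
  and by continuity of f the measure mu* gives no mass to a neighbourhood of a point where
  f < ||f||.
*)

section \<open>Approximate minimax for finite games via multiplicative weights\<close>

lemma exp_mult_le_chord:
  fixes e g :: real
  assumes "0 \<le> g" "g \<le> 1"
  shows "exp (e * g) \<le> 1 + (exp e - 1) * g"
proof -
  have "exp ((1 - g) *\<^sub>R 0 + g *\<^sub>R e) \<le> (1 - g) * exp 0 + g * exp e"
    using assms by (intro convex_onD[OF exp_convex]) auto
  then show ?thesis by (simp add: algebra_simps)
qed

lemma exp_minus_one_mult_le:
  fixes \<eta> b :: real
  assumes "0 \<le> \<eta>" "\<eta> \<le> 1" "b \<le> 1"
  shows "(exp \<eta> - 1) * b \<le> \<eta> * b + \<eta>\<^sup>2"
proof (cases "0 \<le> b")
  case True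
  have "(exp \<eta> - 1) * b \<le> (\<eta> + \<eta>\<^sup>2) * b"
    using exp_bound[OF assms(1,2)] True by (intro mult_right_mono) auto
  also have "\<dots> \<le> \<eta> * b + \<eta>\<^sup>2"
    using True assms(3) mult_left_le[of b "\<eta>\<^sup>2"] by (simp add: distrib_right)
  finally show ?thesis .
next
  case False
  then have "(exp \<eta> - 1) * b \<le> \<eta> * b"
    using exp_ge_add_one_self[of \<eta>] by (intro mult_right_mono_neg) linarith+
  then show ?thesis by (simp add: add_increasing2)
qed

definition hedge_weights :: "real \<Rightarrow> 'p set \<Rightarrow> ('p \<Rightarrow> real) \<Rightarrow> 'p \<Rightarrow> real" where
  "hedge_weights \<eta> P G p = exp (\<eta> * G p) / (\<Sum>q\<in>P. exp (\<eta> * G q))"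

lemma hedge_weights_nonneg: "0 \<le> hedge_weights \<eta> P G p"
  unfolding hedge_weights_def by (simp add: sum_nonneg)

lemma sum_hedge_weights:
  assumes "finite P" "P \<noteq> {}"
  shows "(\<Sum>p\<in>P. hedge_weights \<eta> P G p) = 1"
proof -
  have "(\<Sum>q\<in>P. exp (\<eta> * G q)) > 0" using assms by (intro sum_pos) auto
  then show ?thesis unfolding hedge_weights_def by (simp add: sum_divide_distrib[symmetric])
qed

lemma hedge_potential_step:
  fixes G h :: "'p \<Rightarrow> real"
  assumes "finite P" "P \<noteq> {}" "0 \<le> \<eta>"
    and h01: "\<And>q. q \<in> P \<Longrightarrow> 0 \<le> h q \<and> h q \<le> 1"
    and loss: "(\<Sum>q\<in>P. hedge_weights \<eta> P G q * h q) \<le> b"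
  shows "(\<Sum>q\<in>P. exp (\<eta> * (G q + h q))) \<le> (\<Sum>q\<in>P. exp (\<eta> * G q)) * exp ((exp \<eta> - 1) * b)"
proof -
  define \<Phi> where "\<Phi> = (\<Sum>q\<in>P. exp (\<eta> * G q))"
  have \<Phi>_pos: "\<Phi> > 0" unfolding \<Phi>_def using assms(1,2) by (intro sum_pos) auto
  have "(\<Sum>q\<in>P. exp (\<eta> * (G q + h q))) = (\<Sum>q\<in>P. exp (\<eta> * G q) * exp (\<eta> * h q))"
    by (simp add: distrib_left exp_add)
  also have "\<dots> \<le> (\<Sum>q\<in>P. exp (\<eta> * G q) * (1 + (exp \<eta> - 1) * h q))"
    using h01 by (intro sum_mono mult_left_mono exp_mult_le_chord) auto
  also have "\<dots> = \<Phi> + (exp \<eta> - 1) * (\<Sum>q\<in>P. exp (\<eta> * G q) * h q)"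
    unfolding \<Phi>_def by (simp add: algebra_simps sum.distrib sum_distrib_left sum_subtractf)
  also have "(\<Sum>q\<in>P. exp (\<eta> * G q) * h q) = \<Phi> * (\<Sum>q\<in>P. hedge_weights \<eta> P G q * h q)"
    using \<Phi>_pos unfolding \<Phi>_def hedge_weights_def by (simp add: sum_distrib_left)
  also have "\<Phi> + (exp \<eta> - 1) * (\<Phi> * (\<Sum>q\<in>P. hedge_weights \<eta> P G q * h q))
      = \<Phi> * (1 + (exp \<eta> - 1) * (\<Sum>q\<in>P. hedge_weights \<eta> P G q * h q))"
    by (simp add: algebra_simps)
  also have "\<dots> \<le> \<Phi> * (1 + (exp \<eta> - 1) * b)"
    using loss \<Phi>_pos assms(3) by (intro mult_left_mono add_left_mono) (auto intro!: mult_left_mono)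
  also have "\<dots> \<le> \<Phi> * exp ((exp \<eta> - 1) * b)"
    using \<Phi>_pos by (intro mult_left_mono) (auto simp: add.commute)
  finally show ?thesis unfolding \<Phi>_def .
qed

lemma hedge_regret:
  fixes h :: "nat \<Rightarrow> 'p \<Rightarrow> real"
  assumes "finite P" "p \<in> P" "0 \<le> \<eta>"
    and h01: "\<And>t q. t < T \<Longrightarrow> q \<in> P \<Longrightarrow> 0 \<le> h t q \<and> h t q \<le> 1"
    and loss: "\<And>t. t < T \<Longrightarrow> (\<Sum>q\<in>P. hedge_weights \<eta> P (\<lambda>q. \<Sum>s<t. h s q) q * h t q) \<le> b"
  shows "\<eta> * (\<Sum>t<T. h t p) \<le> ln (card P) + T * ((exp \<eta> - 1) * b)"
proof -
  define \<Phi> where "\<Phi> t = (\<Sum>q\<in>P. exp (\<eta> * (\<Sum>s<t. h s q)))" for t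
  define r where "r = exp ((exp \<eta> - 1) * b)"
  have P: "P \<noteq> {}" "card P > 0" using assms(1,2) card_gt_0_iff by auto
  have potential: "\<Phi> t \<le> card P * r ^ t" if "t \<le> T" for t
    using that
  proof (induction t)
    case 0
    then show ?case by (simp add: \<Phi>_def)
  next
    case (Suc t)
    have "\<Phi> (Suc t) \<le> \<Phi> t * r"
      unfolding \<Phi>_def r_def using Suc.prems h01 loss
      by (simp add: hedge_potential_step[OF assms(1) P(1) assms(3)])
    also have "\<dots> \<le> card P * r ^ t * r"
      using Suc by (intro mult_right_mono) (auto simp: r_def)
    finally show ?case by (simp add: algebra_simps)
  qed
  have "exp (\<eta> * (\<Sum>t<T. h t p)) \<le> \<Phi> T"
    unfolding \<Phi>_def using assms(1,2) by (intro member_le_sum) auto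
  also have "\<dots> \<le> card P * r ^ T" by (rule potential) simp
  also have "\<dots> = exp (ln (card P) + T * ((exp \<eta> - 1) * b))"
    using P by (simp add: r_def exp_add exp_of_nat_mult)
  finally show ?thesis by simp
qed

lemma exists_sequence_beating_hedge:
  fixes g :: "'x \<Rightarrow> 'p \<Rightarrow> real"
  assumes "finite P" "P \<noteq> {}"
    and beat: "\<And>w. (\<forall>p\<in>P. 0 \<le> w p) \<Longrightarrow> (\<Sum>p\<in>P. w p) = 1 \<Longrightarrow>
                 \<exists>x\<in>K. (\<Sum>p\<in>P. w p * g x p) \<le> b"
  obtains xs :: "nat \<Rightarrow> 'x" where "\<And>t. xs t \<in> K"
    and "\<And>t. (\<Sum>p\<in>P. hedge_weights \<eta> P (\<lambda>q. \<Sum>s<t. g (xs s) q) p * g (xs t) p) \<le> b"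
proof -
  obtain sel where sel: "\<And>G. sel G \<in> K \<and> (\<Sum>p\<in>P. hedge_weights \<eta> P G p * g (sel G) p) \<le> b"
    using beat[OF _ sum_hedge_weights[OF assms(1,2)]] hedge_weights_nonneg by metis
  define G where "G = rec_nat (\<lambda>_. 0) (\<lambda>t G q. G q + g (sel G) q)"
  have "G t = (\<lambda>q. \<Sum>s<t. g (sel (G s)) q)" for t
    by (induction t) (simp_all add: G_def)
  then show ?thesis
    using that[of "\<lambda>t. sel (G t)"] sel by metis
qed

lemma approx_minimax_finite:
  fixes g :: "'x \<Rightarrow> 'p \<Rightarrow> real"
  assumes "finite P" "K \<noteq> {}"
    and g01: "\<And>x p. x \<in> K \<Longrightarrow> p \<in> P \<Longrightarrow> 0 \<le> g x p \<and> g x p \<le> 1"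
    and average: "\<And>T xs. T > 0 \<Longrightarrow> (\<forall>t<T. xs t \<in> K) \<Longrightarrow>
                    \<exists>y\<in>K. \<forall>p\<in>P. real T * g y p \<le> (\<Sum>t<T. g (xs t) p)"
    and cover: "\<And>x. x \<in> K \<Longrightarrow> \<exists>p\<in>P. c \<le> g x p"
    and "\<epsilon> > 0"
  shows "\<exists>w. (\<forall>p\<in>P. 0 \<le> w p) \<and> (\<Sum>p\<in>P. w p) = 1 \<and>
             (\<forall>x\<in>K. c - \<epsilon> \<le> (\<Sum>p\<in>P. w p * g x p))"
proof (rule ccontr)
  \<comment> \<open>If every mixed strategy on P is beaten by more than \<epsilon>, Hedge played against the beating
    points gains at most c - \<epsilon> per round, whereas by averaging and covering a single p gains c
    per round; the regret bound rules this out for large T.\<close>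
  assume none: "\<not> ?thesis"
  have beat: "\<exists>x\<in>K. (\<Sum>p\<in>P. w p * g x p) \<le> c - \<epsilon>"
    if "\<forall>p\<in>P. 0 \<le> w p" "(\<Sum>p\<in>P. w p) = 1" for w
  proof (rule ccontr)
    assume "\<not> ?thesis"
    then have "\<forall>x\<in>K. c - \<epsilon> \<le> (\<Sum>p\<in>P. w p * g x p)" by (auto simp: not_le)
    with none that show False by blast
  qed
  obtain x0 p0 where "x0 \<in> K" "p0 \<in> P" "c \<le> g x0 p0" using assms(2) cover by blast
  then have "P \<noteq> {}" and c_le_1: "c \<le> 1" using g01 by fastforce+
  define \<eta> where "\<eta> = min \<epsilon> 1 / 2"
  have \<eta>: "0 < \<eta>" "\<eta> \<le> 1" "2 * \<eta> \<le> \<epsilon>" using \<open>\<epsilon> > 0\<close> unfolding \<eta>_def by auto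
  obtain xs :: "nat \<Rightarrow> 'x" where xsK: "\<And>t. xs t \<in> K" and loss:
    "\<And>t. (\<Sum>p\<in>P. hedge_weights \<eta> P (\<lambda>q. \<Sum>s<t. g (xs s) q) p * g (xs t) p) \<le> c - \<epsilon>"
    using exists_sequence_beating_hedge[OF assms(1) \<open>P \<noteq> {}\<close> beat] by metis
  obtain T :: nat where T: "ln (card P) / \<eta>\<^sup>2 < T" using reals_Archimedean2 by blast
  moreover have "0 \<le> ln (card P) / \<eta>\<^sup>2"
    using \<open>finite P\<close> \<open>P \<noteq> {}\<close>
    by (intro divide_nonneg_nonneg ln_ge_zero) (auto simp: Suc_le_eq card_gt_0_iff)
  ultimately have "T > 0" by linarith
  then obtain y p where "y \<in> K" "p \<in> P" "c \<le> g y p" and y: "real T * g y p \<le> (\<Sum>t<T. g (xs t) p)"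
    using average[of T xs] xsK cover by blast
  have "\<eta> * (real T * c) \<le> \<eta> * (\<Sum>t<T. g (xs t) p)"
    using \<open>c \<le> g y p\<close> y \<eta> by (intro mult_left_mono order_trans[OF _ y]) auto
  also have "\<dots> \<le> ln (card P) + T * ((exp \<eta> - 1) * (c - \<epsilon>))"
    using xsK g01 loss \<eta> \<open>p \<in> P\<close> by (intro hedge_regret[OF assms(1)]) auto
  also have "\<dots> \<le> ln (card P) + T * (\<eta> * (c - \<epsilon>) + \<eta>\<^sup>2)"
    using exp_minus_one_mult_le[of \<eta> "c - \<epsilon>"] \<eta> c_le_1 \<open>\<epsilon> > 0\<close>
    by (intro add_left_mono mult_left_mono) auto
  finally have "T * \<eta> * (\<epsilon> - \<eta>) \<le> ln (card P)"
    by (simp add: algebra_simps power2_eq_square)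
  moreover have "T * \<eta>\<^sup>2 \<le> T * \<eta> * (\<epsilon> - \<eta>)"
    using \<eta> by (simp add: power2_eq_square mult.assoc mult_left_mono)
  moreover have "ln (card P) < T * \<eta>\<^sup>2" using T \<eta> by (simp add: divide_less_eq)
  ultimately show False by linarith
qed

section \<open>The payoff function D\<close>

lemma D_nonneg: "0 \<le> p \<Longrightarrow> p \<le> 1 \<Longrightarrow> 0 \<le> D n x p"
  unfolding D_def by (intro sum_nonneg) auto

lemma D_le_1:
  assumes "0 \<le> p" "p \<le> 1" "x \<in> {..n} \<rightarrow> {0..1}"
  shows "D n x p \<le> 1"
proof -
  have "D n x p \<le> (\<Sum>k\<le>n. real (n choose k) * p ^ k * (1 - p) ^ (n - k))"
    unfolding D_def
  proof (intro sum_mono)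
    fix k assume "k \<in> {..n}"
    then have "\<bar>p - x k\<bar> \<le> 1" using assms by (auto simp: Pi_def abs_le_iff)
    then show "real (n choose k) * p ^ k * (1 - p) ^ (n - k) * \<bar>p - x k\<bar>
        \<le> real (n choose k) * p ^ k * (1 - p) ^ (n - k)"
      using assms by (simp add: mult_left_le)
  qed
  also have "\<dots> = 1"
    using binomial_ring[of p "1 - p" n] by simp
  finally show ?thesis .
qed

lemma D_restrict: "D n (restrict x {..n}) p = D n x p"
  unfolding D_def by (intro sum.cong) auto

lemma D_average_le:
  assumes "T > 0" "0 \<le> p" "p \<le> 1"
  shows "real T * D n (\<lambda>k. (\<Sum>t<T. xs t k) / real T) p \<le> (\<Sum>t<T. D n (xs t) p)"
proof -
  have average: "real T * \<bar>p - (\<Sum>t<T. xs t k) / real T\<bar> \<le> (\<Sum>t<T. \<bar>p - xs t k\<bar>)" for k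
  proof -
    have "real T * \<bar>p - (\<Sum>t<T. xs t k) / real T\<bar> = \<bar>\<Sum>t<T. p - xs t k\<bar>"
      using assms by (simp add: sum_subtractf abs_mult[symmetric] field_simps)
    then show ?thesis by simp
  qed
  have "real T * D n (\<lambda>k. (\<Sum>t<T. xs t k) / real T) p
      = (\<Sum>k\<le>n. real (n choose k) * p ^ k * (1 - p) ^ (n - k) * (real T * \<bar>p - (\<Sum>t<T. xs t k) / real T\<bar>))"
    unfolding D_def by (simp add: sum_distrib_left mult_ac)
  also have "\<dots> \<le> (\<Sum>k\<le>n. real (n choose k) * p ^ k * (1 - p) ^ (n - k) * (\<Sum>t<T. \<bar>p - xs t k\<bar>))"
    using average assms by (intro sum_mono mult_left_mono) auto
  also have "\<dots> = (\<Sum>t<T. D n (xs t) p)"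
    unfolding D_def by (simp add: sum_distrib_left sum.swap[of _ "{..<T}"])
  finally show ?thesis .
qed

lemma abs_mult_diff_le:
  fixes a b c d :: real
  assumes "\<bar>b\<bar> \<le> 1" "\<bar>c\<bar> \<le> 1"
  shows "\<bar>a * b - c * d\<bar> \<le> \<bar>a - c\<bar> + \<bar>b - d\<bar>"
proof -
  have "a * b - c * d = (a - c) * b + c * (b - d)" by (simp add: algebra_simps)
  then have "\<bar>a * b - c * d\<bar> \<le> \<bar>a - c\<bar> * \<bar>b\<bar> + \<bar>c\<bar> * \<bar>b - d\<bar>"
    by (metis abs_mult abs_triangle_ineq)
  also have "\<dots> \<le> \<bar>a - c\<bar> + \<bar>b - d\<bar>"
    using assms by (intro add_mono mult_left_le mult_left_le_one_le) auto
  finally show ?thesis .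
qed

lemma D_lipschitz:
  assumes x: "x \<in> {..n} \<rightarrow> {0..1}" and p: "0 \<le> p" "p \<le> 1" and q: "0 \<le> q" "q \<le> 1"
  shows "\<bar>D n x p - D n x q\<bar> \<le> 2 ^ n * real (n + 1) * \<bar>p - q\<bar>"
proof -
  have summand: "\<bar>p ^ k * (1 - p) ^ (n - k) * \<bar>p - x k\<bar> - q ^ k * (1 - q) ^ (n - k) * \<bar>q - x k\<bar>\<bar>
      \<le> real (n + 1) * \<bar>p - q\<bar>" if "k \<le> n" for k
  proof -
    have xk: "0 \<le> x k" "x k \<le> 1" using x that by auto
    have "\<bar>p ^ k * (1 - p) ^ (n - k) * \<bar>p - x k\<bar> - q ^ k * (1 - q) ^ (n - k) * \<bar>q - x k\<bar>\<bar>
        \<le> \<bar>p ^ k * (1 - p) ^ (n - k) - q ^ k * (1 - q) ^ (n - k)\<bar> + \<bar>\<bar>p - x k\<bar> - \<bar>q - x k\<bar>\<bar>"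
      using p q xk by (intro abs_mult_diff_le) (auto simp: abs_le_iff power_le_one mult_le_one)
    also have "\<dots> \<le> (\<bar>p ^ k - q ^ k\<bar> + \<bar>(1 - p) ^ (n - k) - (1 - q) ^ (n - k)\<bar>) + \<bar>p - q\<bar>"
      using p q by (intro add_mono abs_mult_diff_le abs_triangle_ineq3) (auto simp: power_le_one)
    also have "\<dots> \<le> (real k * \<bar>p - q\<bar> + real (n - k) * \<bar>(1 - p) - (1 - q)\<bar>) + \<bar>p - q\<bar>"
      using p q norm_power_diff[of p q k] norm_power_diff[of "1 - p" "1 - q" "n - k"]
      by (intro add_mono) auto
    also have "\<dots> = real (n + 1) * \<bar>p - q\<bar>"
      using that by (simp add: algebra_simps abs_minus_commute)
    finally show ?thesis .
  qed
  have "\<bar>D n x p - D n x q\<bar> = \<bar>\<Sum>k\<le>n. real (n choose k) *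
      (p ^ k * (1 - p) ^ (n - k) * \<bar>p - x k\<bar> - q ^ k * (1 - q) ^ (n - k) * \<bar>q - x k\<bar>)\<bar>"
    unfolding D_def by (simp add: sum_subtractf[symmetric] algebra_simps)
  also have "\<dots> \<le> (\<Sum>k\<le>n. real (n choose k) * (real (n + 1) * \<bar>p - q\<bar>))"
    using summand by (intro order_trans[OF sum_abs] sum_mono) (auto simp: abs_mult mult_left_mono)
  also have "\<dots> = 2 ^ n * real (n + 1) * \<bar>p - q\<bar>"
    using choose_row_sum[of n] of_nat_sum[of "\<lambda>k. n choose k" "{..n}", where 'a=real]
    by (simp add: sum_distrib_right[symmetric])
  finally show ?thesis .
qed

lemma continuous_on_D: "continuous_on S (D n x)"
  unfolding D_def by (intro continuous_intros)

lemma exists_cube_point_D_le_average: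
  assumes "T > 0" "\<forall>t<T. xs t \<in> {..n} \<rightarrow> {0..1}"
  shows "\<exists>y\<in>{..n} \<rightarrow> {0..1}. \<forall>p\<in>{0..1}. real T * D n y p \<le> (\<Sum>t<T. D n (xs t) p)"
proof
  show "(\<lambda>k. (\<Sum>t<T. xs t k) / real T) \<in> {..n} \<rightarrow> {0..1}"
  proof
    fix k assume "k \<in> {..n}"
    then have "0 \<le> (\<Sum>t<T. xs t k)" "(\<Sum>t<T. xs t k) \<le> (\<Sum>t<T. 1)"
      using assms(2) by (fastforce intro!: sum_nonneg sum_mono)+
    then show "(\<Sum>t<T. xs t k) / real T \<in> {0..1}" using assms(1) by auto
  qed
  show "\<forall>p\<in>{0..1}. real T * D n (\<lambda>k. (\<Sum>t<T. xs t k) / real T) p \<le> (\<Sum>t<T. D n (xs t) p)"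
    using assms(1) D_average_le by auto
qed

lemma bdd_above_abs_D: "x \<in> {..n} \<rightarrow> {0..1} \<Longrightarrow> bdd_above ((\<lambda>p. \<bar>D n x p\<bar>) ` {0..1})"
  using D_nonneg D_le_1 by (intro bdd_aboveI[where M=1]) auto

lemma D_le_supnorm:
  assumes "x \<in> {..n} \<rightarrow> {0..1}" "p \<in> {0..1}"
  shows "D n x p \<le> supnorm n x"
proof -
  have "\<bar>D n x p\<bar> \<le> supnorm n x"
    unfolding supnorm_def using assms bdd_above_abs_D by (intro cSUP_upper) auto
  then show ?thesis by simp
qed

lemma supnorm_attained:
  assumes "x \<in> {..n} \<rightarrow> {0..1}"
  obtains q where "q \<in> {0..1}" "D n x q = supnorm n x"
proof -
  obtain q where q: "q \<in> {0..1}" and max: "\<And>p. p \<in> {0..1} \<Longrightarrow> D n x p \<le> D n x q"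
    using continuous_attains_sup[of "{0..1}" "D n x"] continuous_on_D by fastforce
  have "supnorm n x \<le> D n x q"
    unfolding supnorm_def using max D_nonneg by (intro cSUP_least) auto
  then show ?thesis using that q D_le_supnorm[OF assms q] by simp
qed

lemma supnorm_le_D_grid:
  fixes N :: nat
  assumes x: "x \<in> {..n} \<rightarrow> {0..1}" and "N > 0"
  shows "\<exists>j\<le>N. supnorm n x - 2 ^ n * real (n + 1) / N \<le> D n x (j / N)"
proof -
  obtain q where q: "q \<in> {0..1}" "D n x q = supnorm n x"
    using supnorm_attained[OF x] .
  define j where "j = nat \<lfloor>q * N\<rfloor>"
  have "0 \<le> q * N" "q * N \<le> N" using q(1) by (auto simp: mult_left_le_one_le)
  then have j: "real j \<le> q * N" "q * N < real j + 1" "j \<le> N"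
    unfolding j_def by linarith+
  have "\<bar>j / N - q\<bar> = \<bar>real j - q * N\<bar> / N"
    using \<open>N > 0\<close> by (simp add: field_simps)
  also have "\<dots> \<le> 1 / N" using j by (intro divide_right_mono) auto
  finally have near: "\<bar>j / N - q\<bar> \<le> 1 / N" .
  have "j / N \<in> {0..1}" using j(3) by (auto simp: divide_le_eq_1)
  then have "\<bar>D n x (j / N) - D n x q\<bar> \<le> 2 ^ n * real (n + 1) * \<bar>j / N - q\<bar>"
    using D_lipschitz[OF x] q(1) by auto
  also have "\<dots> \<le> 2 ^ n * real (n + 1) * (1 / N)"
    using near by (intro mult_left_mono) auto
  finally have "supnorm n x - 2 ^ n * real (n + 1) / N \<le> D n x (j / N)"
    using q(2) by (simp add: abs_le_iff)
  then show ?thesis using j(3) by blast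
qed

section \<open>Strategies as probability measures on [0,1]\<close>

lemma prob_space_Omega: "\<mu> \<in> Omega \<Longrightarrow> prob_space \<mu>"
  and sets_Omega: "\<mu> \<in> Omega \<Longrightarrow> sets \<mu> = sets borel"
  unfolding Omega_def by auto

lemma AE_Omega_unit_interval:
  assumes "\<mu> \<in> Omega" shows "AE p in \<mu>. p \<in> {0..1}"
proof -
  interpret prob_space \<mu> using assms by (rule prob_space_Omega)
  have "prob {0..1} = 1" using assms by (simp add: Omega_def measure_def)
  then show ?thesis by (rule AE_prob_1)
qed

lemma return_in_Omega: "0 \<le> c \<Longrightarrow> c \<le> 1 \<Longrightarrow> return borel (c::real) \<in> Omega"
  unfolding Omega_def by (auto intro: prob_space_return)

lemma prob_space_PiM_Omega: "\<sigma> \<in> {..n::nat} \<rightarrow> Omega \<Longrightarrow> prob_space (PiM {..n} \<sigma>)"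
  by (intro prob_space_PiM) (auto dest: prob_space_Omega)

lemma AE_PiM_Omega_cube:
  fixes n :: nat
  assumes \<sigma>: "\<sigma> \<in> {..n} \<rightarrow> Omega"
  shows "AE x in PiM {..n} \<sigma>. x \<in> {..n} \<rightarrow> {0..1}"
proof -
  \<comment> \<open>PiM ignores \<sigma> outside {..n}; putting probability measures there yields a
    product_prob_space.\<close>
  define \<sigma>' where "\<sigma>' = (\<lambda>i. if i \<le> n then \<sigma> i else return borel (0::real))"
  have eq: "PiM {..n} \<sigma> = PiM {..n} \<sigma>'"
    unfolding \<sigma>'_def by (intro PiM_cong) auto
  have ps: "prob_space (\<sigma>' i)" for i
    using \<sigma> unfolding \<sigma>'_def by (auto dest: prob_space_Omega intro: prob_space_return)
  interpret product_prob_space \<sigma>'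
    unfolding product_prob_space_def product_prob_space_axioms_def product_sigma_finite_def
    using ps by (auto intro: prob_space_imp_sigma_finite)
  interpret Q: prob_space "PiM {..n} \<sigma>'" by (rule prob_space_PiM) (rule ps)
  have "emeasure (PiM {..n} \<sigma>') (Pi\<^sub>E {..n} (\<lambda>_. {0..1})) = (\<Prod>i\<le>n. emeasure (\<sigma>' i) {0..1})"
  proof (intro emeasure_PiM)
    fix i assume "i \<in> {..n}"
    then show "{0..1} \<in> sets (\<sigma>' i)"
      using sets_Omega[OF funcset_mem[OF \<sigma> \<open>i \<in> {..n}\<close>]] by (simp add: \<sigma>'_def)
  qed simp
  also have "\<dots> = 1" using \<sigma> by (intro prod.neutral) (auto simp: \<sigma>'_def Omega_def)
  finally have "Q.prob (Pi\<^sub>E {..n} (\<lambda>_. {0..1})) = 1" by (simp add: measure_def)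
  then have "AE x in PiM {..n} \<sigma>'. x \<in> Pi\<^sub>E {..n} (\<lambda>_. {0..1})" by (rule Q.AE_prob_1)
  then show ?thesis unfolding eq by (rule AE_mp) (auto simp: PiE_def)
qed

lemma measurable_D_PiM:
  assumes "\<And>i. i \<in> {..n} \<Longrightarrow> sets (\<sigma> i) = sets borel"
  shows "(\<lambda>x. D n x p) \<in> borel_measurable (PiM {..n} \<sigma>)"
proof -
  have "sets (PiM {..n} \<sigma>) = sets (PiM {..n} (\<lambda>_. borel))"
    using assms by (intro sets_PiM_cong) auto
  moreover have "(\<lambda>x. D n x p) \<in> borel_measurable (PiM {..n} (\<lambda>_. borel))"
    unfolding D_def by measurable
  ultimately show ?thesis using measurable_cong_sets by blast
qed

lemma measurable_D_pair_PiM: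
  assumes "\<And>i. i \<in> {..n} \<Longrightarrow> sets (\<sigma> i) = sets borel"
  shows "(\<lambda>(p, x). D n x p) \<in> borel_measurable (borel \<Otimes>\<^sub>M PiM {..n} \<sigma>)"
proof -
  have "sets (borel \<Otimes>\<^sub>M PiM {..n} \<sigma>) = sets (borel \<Otimes>\<^sub>M PiM {..n} (\<lambda>_. borel))"
    using assms by (intro sets_pair_measure_cong sets_PiM_cong) auto
  moreover have "(\<lambda>(p, x). D n x p) \<in> borel_measurable (borel \<Otimes>\<^sub>M PiM {..n} (\<lambda>_. borel))"
    unfolding D_def by measurable
  ultimately show ?thesis using measurable_cong_sets by blast
qed

lemma integrable_D_PiM:
  assumes \<sigma>: "\<sigma> \<in> {..n} \<rightarrow> Omega" and p: "0 \<le> p" "p \<le> 1"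
  shows "integrable (PiM {..n} \<sigma>) (\<lambda>x. D n x p)"
proof -
  interpret prob_space "PiM {..n} \<sigma>" using \<sigma> by (rule prob_space_PiM_Omega)
  show ?thesis
  proof (rule integrable_const_bound[where B=1])
    show "AE x in PiM {..n} \<sigma>. norm (D n x p) \<le> 1"
      using AE_PiM_Omega_cube[OF \<sigma>] by (rule AE_mp) (use p D_nonneg D_le_1 in auto)
  qed (use \<sigma> in \<open>auto intro!: measurable_D_PiM sets_Omega\<close>)
qed

lemma integrable_D_Omega:
  assumes \<mu>: "\<mu> \<in> Omega" and x: "x \<in> {..n} \<rightarrow> {0..1}"
  shows "integrable \<mu> (D n x)"
proof -
  interpret prob_space \<mu> using \<mu> by (rule prob_space_Omega)
  have "D n x \<in> borel_measurable borel"
    unfolding D_def by measurable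
  then show ?thesis
    using AE_Omega_unit_interval[OF \<mu>] measurable_cong_sets[OF sets_Omega[OF \<mu>] refl] D_nonneg D_le_1[OF _ _ x]
    by (intro integrable_const_bound[where B=1]) (auto elim!: AE_mp)
qed

lemma E_nonneg:
  assumes "\<mu> \<in> Omega"
  shows "0 \<le> E n \<sigma> \<mu>"
  unfolding E_def
proof (rule integral_nonneg_AE)
  show "AE p in \<mu>. 0 \<le> (\<integral>x. D n x p \<partial>PiM {..n} \<sigma>)"
    using AE_Omega_unit_interval[OF assms]
    by (rule AE_mp) (auto intro!: integral_nonneg_AE D_nonneg)
qed

lemma game_value_le_integral_D:
  assumes \<mu>: "\<mu> \<in> Omega" and a: "a \<in> {..n} \<rightarrow> {0..1}"
  shows "game_value n \<mu> \<le> (\<integral>p. D n a p \<partial>\<mu>)"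
proof -
  define \<sigma> where "\<sigma> = (\<lambda>k. return borel (a k))"
  have \<sigma>: "\<sigma> \<in> {..n} \<rightarrow> Omega" using a unfolding \<sigma>_def by (auto intro!: return_in_Omega)
  have "PiM {..n} \<sigma> = return (PiM {..n} (\<lambda>_. borel)) (restrict a {..n})"
    unfolding \<sigma>_def by (rule PiM_return) auto
  moreover have "(\<integral>x. D n x p \<partial>return (PiM {..n} (\<lambda>_. borel)) (restrict a {..n})) = D n a p" for p
    by (subst integral_return[OF _ measurable_D_PiM]) (auto simp: D_restrict space_PiM)
  ultimately have "E n \<sigma> \<mu> = (\<integral>p. D n a p \<partial>\<mu>)"
    unfolding E_def by simp
  moreover have "game_value n \<mu> \<le> E n \<sigma> \<mu>"
    unfolding game_value_def
    by (rule cINF_lower[OF _ \<sigma>]) (auto intro!: bdd_belowI[where m=0] E_nonneg[OF \<mu>])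
  ultimately show ?thesis by simp
qed

lemma Omega_finite_support:
  fixes P :: "real set" and w :: "real \<Rightarrow> real"
  assumes "finite P" "P \<subseteq> {0..1}" "\<forall>p\<in>P. 0 \<le> w p" "(\<Sum>p\<in>P. w p) = 1"
  obtains \<mu> where "\<mu> \<in> Omega"
    and "\<And>h. h \<in> borel_measurable borel \<Longrightarrow> (\<integral>p. h p \<partial>\<mu>) = (\<Sum>p\<in>P. w p * h p)"
proof -
  define w' where "w' p = (if p \<in> P then w p else 0)" for p
  have w'_nonneg: "0 \<le> w' p" for p using assms(3) unfolding w'_def by auto
  have "(\<integral>\<^sup>+p. ennreal (w' p) \<partial>count_space UNIV) = (\<Sum>p\<in>P. ennreal (w' p))"
    using assms(1) by (intro nn_integral_count_space') (auto simp: w'_def)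
  also have "\<dots> = ennreal (\<Sum>p\<in>P. w' p)" using w'_nonneg by simp
  also have "(\<Sum>p\<in>P. w' p) = 1" using assms(4) by (simp add: w'_def)
  finally have w'_sum: "(\<integral>\<^sup>+p. ennreal (w' p) \<partial>count_space UNIV) = 1" by simp
  define q where "q = embed_pmf w'"
  have pmf_q: "pmf q p = w' p" for p unfolding q_def by (rule pmf_embed_pmf[OF w'_nonneg w'_sum])
  have set_q: "set_pmf q \<subseteq> P" unfolding q_def set_embed_pmf[OF w'_nonneg w'_sum] by (auto simp: w'_def)
  define \<mu> where "\<mu> = distr (measure_pmf q) borel id"
  have "emeasure \<mu> {0..1} = measure_pmf.prob q {0..1}"
    unfolding \<mu>_def by (simp add: emeasure_distr measure_pmf.emeasure_eq_measure)
  also have "measure_pmf.prob q {0..1} = 1"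
    using set_q assms(2) by (subst measure_pmf.prob_eq_1) (auto simp: AE_measure_pmf_iff)
  finally have "\<mu> \<in> Omega"
    unfolding Omega_def \<mu>_def by (auto intro: measure_pmf.prob_space_distr)
  moreover have "(\<integral>p. h p \<partial>\<mu>) = (\<Sum>p\<in>P. w p * h p)" if h: "h \<in> borel_measurable borel" for h
  proof -
    have "(\<integral>p. h p \<partial>\<mu>) = (\<integral>p. h p \<partial>measure_pmf q)"
      unfolding \<mu>_def by (subst integral_distr[OF _ h]) auto
    also have "\<dots> = (\<Sum>p\<in>P. h p * pmf q p)"
      using set_q assms(1) by (intro integral_measure_pmf_real) auto
    finally show ?thesis by (simp add: pmf_q w'_def mult.commute)
  qed
  ultimately show ?thesis using that by blast
qed

lemma game_value_ge_finite_support: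
  fixes P :: "real set" and w :: "real \<Rightarrow> real"
  assumes "finite P" "P \<subseteq> {0..1}" "\<forall>p\<in>P. 0 \<le> w p" "(\<Sum>p\<in>P. w p) = 1"
    and bound: "\<forall>x\<in>{..n} \<rightarrow> {0..1}. c \<le> (\<Sum>p\<in>P. w p * D n x p)"
  shows "\<exists>\<mu>\<in>Omega. c \<le> game_value n \<mu>"
proof -
  obtain \<mu> where \<mu>: "\<mu> \<in> Omega"
    and integral_\<mu>: "\<And>h. h \<in> borel_measurable borel \<Longrightarrow> (\<integral>p. h p \<partial>\<mu>) = (\<Sum>p\<in>P. w p * h p)"
    using Omega_finite_support[OF assms(1-4)] by blast
  have "c \<le> E n \<sigma> \<mu>" if \<sigma>: "\<sigma> \<in> {..n} \<rightarrow> Omega" for \<sigma>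
  proof -
    interpret PS: prob_space "PiM {..n} \<sigma>" using \<sigma> by (rule prob_space_PiM_Omega)
    have sets_\<sigma>: "\<And>i. i \<in> {..n} \<Longrightarrow> sets (\<sigma> i) = sets borel"
      using \<sigma> sets_Omega by blast
    have integrable: "integrable (PiM {..n} \<sigma>) (\<lambda>x. w p * D n x p)" if "p \<in> P" for p
      using assms(2) that by (intro integrable_mult_right integrable_D_PiM[OF \<sigma>]) auto
    have "(\<lambda>p. \<integral>x. D n x p \<partial>PiM {..n} \<sigma>) \<in> borel_measurable borel"
      using measurable_D_pair_PiM[OF sets_\<sigma>] by (intro PS.borel_measurable_lebesgue_integral) simp
    then have "E n \<sigma> \<mu> = (\<Sum>p\<in>P. w p * (\<integral>x. D n x p \<partial>PiM {..n} \<sigma>))"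
      unfolding E_def by (rule integral_\<mu>)
    also have "\<dots> = (\<integral>x. (\<Sum>p\<in>P. w p * D n x p) \<partial>PiM {..n} \<sigma>)"
      using integrable by (simp add: Bochner_Integration.integral_sum)
    also have "c \<le> \<dots>"
      using AE_PiM_Omega_cube[OF \<sigma>] bound integrable
      by (intro PS.integral_ge_const Bochner_Integration.integrable_sum) (auto elim!: AE_mp)
    finally show ?thesis .
  qed
  moreover have "(\<lambda>_. return borel 0) \<in> {..n} \<rightarrow> Omega" by (auto intro: return_in_Omega)
  ultimately have "c \<le> game_value n \<mu>"
    unfolding game_value_def by (intro cINF_greatest) auto
  then show ?thesis using \<mu> by blast
qed

lemma exists_Omega_game_value_ge:
  assumes a: "a \<in> {..n} \<rightarrow> {0..1}"
    and a_min: "\<forall>x\<in>{..n} \<rightarrow> {0..1}. supnorm n a \<le> supnorm n x"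
    and "\<epsilon> > 0"
  shows "\<exists>\<mu>\<in>Omega. supnorm n a - \<epsilon> \<le> game_value n \<mu>"
proof -
  define K where "K = {..n} \<rightarrow> {0..1::real}"
  define L where "L = 2 ^ n * real (n + 1)"
  obtain N :: nat where N: "2 * L / \<epsilon> < N" using reals_Archimedean2 by blast
  have "0 < 2 * L / \<epsilon>" using \<open>\<epsilon> > 0\<close> by (simp add: L_def)
  with N have "N > 0" by (metis of_nat_0_less_iff order.strict_trans)
  moreover from N \<open>\<epsilon> > 0\<close> \<open>N > 0\<close> have "L / N \<le> \<epsilon> / 2"
    by (simp add: pos_divide_le_eq field_simps)
  define P where "P = (\<lambda>j. real j / real N) ` {..N}"
  have P: "finite P" "P \<subseteq> {0..1}" unfolding P_def by (auto simp: divide_le_eq_1)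
  have cover: "\<exists>p\<in>P. supnorm n a - \<epsilon> / 2 \<le> D n x p" if "x \<in> K" for x
  proof -
    obtain j where "j \<le> N" "supnorm n x - L / N \<le> D n x (j / N)"
      using supnorm_le_D_grid[of x n N] \<open>N > 0\<close> \<open>x \<in> K\<close> unfolding K_def L_def by blast
    moreover have "supnorm n a \<le> supnorm n x" using a_min \<open>x \<in> K\<close> unfolding K_def by blast
    ultimately show ?thesis using \<open>L / N \<le> \<epsilon> / 2\<close> unfolding P_def by force
  qed
  have average: "\<exists>y\<in>K. \<forall>p\<in>P. real T * D n y p \<le> (\<Sum>t<T. D n (xs t) p)"
    if "T > 0" "\<forall>t<T. xs t \<in> K" for T xs
    using exists_cube_point_D_le_average[of T xs n] that P(2) unfolding K_def by blast
  have "K \<noteq> {}" using a unfolding K_def by blast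
  have D01: "0 \<le> D n x p \<and> D n x p \<le> 1" if "x \<in> K" "p \<in> P" for x p
    using that P(2) D_nonneg D_le_1 unfolding K_def by auto
  obtain w where w: "\<forall>p\<in>P. 0 \<le> w p" "(\<Sum>p\<in>P. w p) = 1"
    and bound: "\<forall>x\<in>K. supnorm n a - \<epsilon> / 2 - \<epsilon> / 2 \<le> (\<Sum>p\<in>P. w p * D n x p)"
    using approx_minimax_finite[OF P(1) \<open>K \<noteq> {}\<close> D01 average cover, of "\<epsilon> / 2"] \<open>\<epsilon> > 0\<close>
    by auto
  show ?thesis
    using game_value_ge_finite_support[OF P w] bound unfolding K_def by simp
qed

section \<open>The support of an optimal strategy\<close>

lemma emeasure_Omega_restrict:
  assumes "\<mu> \<in> Omega" "A \<in> sets borel"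
  shows "emeasure \<mu> A = emeasure \<mu> (A \<inter> {0..1})"
  using AE_Omega_unit_interval[OF assms(1)] sets_Omega[OF assms(1)] assms(2)
  by (intro emeasure_eq_AE) auto

lemma msupport_Omega_subset:
  assumes "\<mu> \<in> Omega" shows "msupport \<mu> \<subseteq> {0..1}"
proof
  fix x assume x: "x \<in> msupport \<mu>"
  show "x \<in> {0..1}"
  proof (rule ccontr)
    assume "x \<notin> {0..1}"
    then obtain e where "e > 0" "ball x e \<subseteq> - {0..1}"
      using openE[of "- {0..1::real}" x] by blast
    then have "ball x e \<inter> {0..1} = {}" by blast
    then have "emeasure \<mu> (ball x e) = 0"
      using emeasure_Omega_restrict[OF assms, of "ball x e"] by simp
    with x \<open>e > 0\<close> show False unfolding msupport_def by auto
  qed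
qed

lemma msupport_subset_maximizers:
  fixes f :: "real \<Rightarrow> real"
  assumes \<mu>: "\<mu> \<in> Omega" and f: "continuous_on {0..1} f" "integrable \<mu> f"
    and le: "\<And>p. p \<in> {0..1} \<Longrightarrow> f p \<le> V" and ge: "V \<le> (\<integral>p. f p \<partial>\<mu>)"
  shows "msupport \<mu> \<subseteq> {p\<in>{0..1}. f p = V}"
proof
  fix x assume x: "x \<in> msupport \<mu>"
  then have x01: "x \<in> {0..1}" using msupport_Omega_subset[OF \<mu>] by blast
  interpret prob_space \<mu> using \<mu> by (rule prob_space_Omega)
  have "f x = V"
  proof (rule ccontr)
    assume "f x \<noteq> V"
    with le[OF x01] have \<eta>: "0 < V - f x" by simp
    obtain e where "e > 0" and close: "\<And>p. p \<in> {0..1} \<Longrightarrow> dist p x < e \<Longrightarrow> dist (f p) (f x) < (V - f x) / 2"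
      using f(1) x01 \<eta> unfolding continuous_on_iff by (metis half_gt_zero)
    define B where "B = ball x e \<inter> {0..1}"
    have B: "B \<in> sets \<mu>" unfolding B_def using sets_Omega[OF \<mu>] by simp
    have "emeasure \<mu> (ball x e) > 0" using x \<open>e > 0\<close> unfolding msupport_def by blast
    then have "emeasure \<mu> B > 0"
      using emeasure_Omega_restrict[OF \<mu>, of "ball x e"] unfolding B_def by simp
    then have "prob B > 0" by (simp add: emeasure_eq_measure)
    have "(\<integral>p. f p \<partial>\<mu>) \<le> (\<integral>p. V - (V - f x) / 2 * indicator B p \<partial>\<mu>)"
    proof (rule integral_mono_AE[OF f(2)])
      show "integrable \<mu> (\<lambda>p. V - (V - f x) / 2 * indicator B p)"
        using B by (intro Bochner_Integration.integrable_diff integrable_mult_right integrable_real_indicator)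
          (auto simp: emeasure_eq_measure)
      have inB: "f p \<le> V - (V - f x) / 2" if "p \<in> B" for p
      proof -
        have "\<bar>f p - f x\<bar> < (V - f x) / 2"
          using close that unfolding B_def by (simp add: dist_commute dist_real_def)
        then have "f p - f x < (V - f x) / 2" by (rule le_less_trans[OF abs_ge_self])
        then show ?thesis by (simp add: field_simps)
      qed
      show "AE p in \<mu>. f p \<le> V - (V - f x) / 2 * indicator B p"
        using AE_Omega_unit_interval[OF \<mu>] by (rule AE_mp) (rule AE_I2, auto intro: le inB split: split_indicator)
    qed
    also have "\<dots> = V - (V - f x) / 2 * prob B"
      using B by (subst Bochner_Integration.integral_diff) (auto simp: emeasure_eq_measure prob_space)
    also have "\<dots> < V" using \<eta> \<open>prob B > 0\<close> by simp
    finally show False using ge by simp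
  qed
  then show "x \<in> {p\<in>{0..1}. f p = V}" using x01 by simp
qed

theorem lemma4p4:
  fixes n :: nat and \<mu>star :: "real measure" and a :: "nat \<Rightarrow> real"
  assumes "n \<ge> 1"
    and "\<mu>star \<in> Omega"
    and "\<forall>\<mu>\<in>Omega. game_value n \<mu> \<le> game_value n \<mu>star"
    and "a \<in> {..n} \<rightarrow> {0..1}"
    and "\<forall>x\<in>{..n} \<rightarrow> {0..1}. supnorm n a \<le> supnorm n x"
  shows "msupport \<mu>star \<subseteq> {p\<in>{0..1}. D n a p = supnorm n a}"
proof -
  have "supnorm n a \<le> game_value n \<mu>star"
  proof (rule field_le_epsilon)
    fix \<epsilon> :: real assume "0 < \<epsilon>"
    then obtain \<mu> where "\<mu> \<in> Omega" "supnorm n a - \<epsilon> \<le> game_value n \<mu>"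
      using exists_Omega_game_value_ge[OF assms(4,5)] by blast
    then show "supnorm n a \<le> game_value n \<mu>star + \<epsilon>" using assms(3) by force
  qed
  also have "\<dots> \<le> (\<integral>p. D n a p \<partial>\<mu>star)"
    by (rule game_value_le_integral_D[OF assms(2,4)])
  finally show ?thesis
    using msupport_subset_maximizers[OF assms(2) continuous_on_D integrable_D_Omega[OF assms(2,4)]]
      D_le_supnorm[OF assms(4)] by blast
qed

end
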